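(* For every $\alpha>0$ there exists a choice of $\beta>0$ such that Primal Online Balanced Descent (with $\ell_2$ norm and Euclidean projection) has competitive ratio at most $3+O(1/\alpha)$ for SOCO with $\ell_2$ switching costs when all cost functions are locally $\alpha$-polyhedral. More generally, let $\|\cdot\|$ be an arbitrary norm on $\mathbb{R}^d$ and let $k_1,k_2>0$ be constants with $k_1\|x\|\le\|x\|_2\le k_2\|x\|$ for all $x$; then there exists a choice of $\beta$ such that the algorithm has competitive ratio at most $\frac{\max\{k_2,1\}}{\min\{k_1,1\}}\left(3+O(1/\alpha)\right)$ when run on locally $\alpha$-polyhedral cost functions with switching cost $\|\cdot\|$.
   Context: SOCO: a convex decision set $\mathcal{X}\subseteq\mathbb{R}^d$, a norm $\|\cdot\|$ (switching cost), a starting point $x_0$, and non-negative convex cost functions $f_1,\dots,f_T$ ($f_t=+\infty$ outside $\mathcal{X}$). At round $t$ the algorithm observes $f_t$, then chooses $x_t\in\mathcal{X}$, paying $f_t(x_t)+\|x_t-x_{t-1}\|$. $\mathrm{cost}(ALG)=\sum_t f_t(x_t)+\|x_t-x_{t-1}\|$; $\mathrm{cost}(OPT)$ is the minimum of the same expression over all $(x_1,\dots,x_T)\in\mathcal{X}^T$ chosen with full knowledge. An algorithm is $C$-competitive if $\mathrm{cost}(ALG)\le C\,\mathrm{cost}(OPT)$ for all cost sequences. A function $f_t$ with minimizer $v_t$ is locally $\alpha$-polyhedral w.r.t. a norm $\|\cdot\|$ if there is $\epsilon>0$ such that $f_t(x)-f_t(v_t)\ge\alpha\|x-v_t\|$ for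 all $x\in\mathcal{X}$ with $\|x-v_t\|\le\epsilon$. Primal Online Balanced Descent with parameter $\beta>0$, norm $\|\cdot\|$ and mirror map $\Phi$ (here $\Phi(x)=\frac12\|x\|_2^2$, so $\Pi^\Phi_K$ is Euclidean projection): for $t=1,\dots,T$: observe $f_t$, let $v_t=\arg\min_x f_t(x)$; if $\|x_{t-1}-v_t\|<\beta f_t(v_t)$ set $x_t=v_t$; otherwise, with $K^l_t=\{x:f_t(x)\le l\}$ and $x(l)=\Pi^\Phi_{K^l_t}(x_{t-1})$, increase $l$ until $\|x(l)-x_{t-1}\|=\beta l$ and set $x_t=x(l)$. Here $\Pi^\Phi_K(x)=\arg\min_{y\in K}D_\Phi(y,x)$ with $D_\Phi(x,y)=\Phi(x)-\Phi(y)-\nabla\Phi(y)^T(x-y)$. *)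

theory Defs
  imports "HOL-Analysis.Analysis"
begin

text \<open>Points of R^d are functions nat => real vanishing at every index >= d.
  This explicit encoding lets constants (the O(1/alpha) constant) be stated
  uniformly in the dimension d.\<close>

definition Rd :: "nat \<Rightarrow> (nat \<Rightarrow> real) set" where
  "Rd d = {x. \<forall>i\<ge>d. x i = 0}"

definition vadd :: "(nat \<Rightarrow> real) \<Rightarrow> (nat \<Rightarrow> real) \<Rightarrow> (nat \<Rightarrow> real)" where
  "vadd x y = (\<lambda>i. x i + y i)"

definition vsub :: "(nat \<Rightarrow> real) \<Rightarrow> (nat \<Rightarrow> real) \<Rightarrow> (nat \<Rightarrow> real)" where
  "vsub x y = (\<lambda>i. x i - y i)"

definition vscale :: "real \<Rightarrow> (nat \<Rightarrow> real) \<Rightarrow> (nat \<Rightarrow> real)" where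
  "vscale c x = (\<lambda>i. c * x i)"

definition l2 :: "nat \<Rightarrow> (nat \<Rightarrow> real) \<Rightarrow> real" where
  "l2 d x = sqrt (\<Sum>i<d. (x i)\<^sup>2)"

definition is_norm_on :: "nat \<Rightarrow> ((nat \<Rightarrow> real) \<Rightarrow> real) \<Rightarrow> bool" where
  "is_norm_on d N \<longleftrightarrow>
     (\<forall>x\<in>Rd d. 0 \<le> N x \<and> (N x = 0 \<longleftrightarrow> x = (\<lambda>i. 0))) \<and>
     (\<forall>x\<in>Rd d. \<forall>c. N (vscale c x) = \<bar>c\<bar> * N x) \<and>
     (\<forall>x\<in>Rd d. \<forall>y\<in>Rd d. N (vadd x y) \<le> N x + N y)"

definition convex_set :: "(nat \<Rightarrow> real) set \<Rightarrow> bool" where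
  "convex_set X \<longleftrightarrow>
     (\<forall>x\<in>X. \<forall>y\<in>X. \<forall>u::real. 0 \<le> u \<and> u \<le> 1 \<longrightarrow> vadd (vscale u x) (vscale (1 - u) y) \<in> X)"

definition convex_fun_on :: "(nat \<Rightarrow> real) set \<Rightarrow> ((nat \<Rightarrow> real) \<Rightarrow> real) \<Rightarrow> bool" where
  "convex_fun_on X f \<longleftrightarrow>
     (\<forall>x\<in>X. \<forall>y\<in>X. \<forall>u::real. 0 \<le> u \<and> u \<le> 1 \<longrightarrow>
        f (vadd (vscale u x) (vscale (1 - u) y)) \<le> u * f x + (1 - u) * f y)"

text \<open>Cost functions are given on X (they are +infinity outside X, which is
  modelled by restricting all decisions to X).\<close>

definition is_minimizer :: "(nat \<Rightarrow> real) set \<Rightarrow> ((nat \<Rightarrow> real) \<Rightarrow> real) \<Rightarrow> (nat \<Rightarrow> real) \<Rightarrow> bool" where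
  "is_minimizer X f v \<longleftrightarrow> v \<in> X \<and> (\<forall>x\<in>X. f v \<le> f x)"

definition locally_polyhedral ::
  "(nat \<Rightarrow> real) set \<Rightarrow> ((nat \<Rightarrow> real) \<Rightarrow> real) \<Rightarrow> real \<Rightarrow> ((nat \<Rightarrow> real) \<Rightarrow> real) \<Rightarrow> bool" where
  "locally_polyhedral X N \<alpha> f \<longleftrightarrow>
     (\<exists>v. is_minimizer X f v \<and>
        (\<exists>\<epsilon>>0. \<forall>x\<in>X. N (vsub x v) \<le> \<epsilon> \<longrightarrow> f x - f v \<ge> \<alpha> * N (vsub x v)))"

definition soco_cost ::
  "((nat \<Rightarrow> real) \<Rightarrow> real) \<Rightarrow> (nat \<Rightarrow> (nat \<Rightarrow> real) \<Rightarrow> real) \<Rightarrow> nat \<Rightarrow> (nat \<Rightarrow> nat \<Rightarrow> real) \<Rightarrow> real" where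
  "soco_cost N f T x = (\<Sum>t\<in>{1..T}. f t (x t) + N (vsub (x t) (x (t - 1))))"

definition soco_opt ::
  "(nat \<Rightarrow> real) set \<Rightarrow> ((nat \<Rightarrow> real) \<Rightarrow> real) \<Rightarrow> (nat \<Rightarrow> (nat \<Rightarrow> real) \<Rightarrow> real) \<Rightarrow> (nat \<Rightarrow> real) \<Rightarrow> nat \<Rightarrow> real" where
  "soco_opt X N f x0 T =
     Inf {soco_cost N f T y | y. y 0 = x0 \<and> (\<forall>t\<in>{1..T}. y t \<in> X)}"

definition euclid_proj :: "nat \<Rightarrow> (nat \<Rightarrow> real) set \<Rightarrow> (nat \<Rightarrow> real) \<Rightarrow> (nat \<Rightarrow> real) \<Rightarrow> bool" where
  "euclid_proj d K x y \<longleftrightarrow> y \<in> K \<and> (\<forall>z\<in>K. l2 d (vsub y x) \<le> l2 d (vsub z x))"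

text \<open>The level l at which ||x(l) - x_{t-1}|| = beta * l is unique (the left side
  is non-increasing in l, the right side strictly increasing), so the
  "increase l until" rule is captured by an existential.\<close>
definition pobd_run ::
  "nat \<Rightarrow> (nat \<Rightarrow> real) set \<Rightarrow> real \<Rightarrow> (nat \<Rightarrow> (nat \<Rightarrow> real) \<Rightarrow> real) \<Rightarrow> (nat \<Rightarrow> real) \<Rightarrow> nat
     \<Rightarrow> (nat \<Rightarrow> nat \<Rightarrow> real) \<Rightarrow> bool" where
  "pobd_run d X \<beta> f x0 T x \<longleftrightarrow> x 0 = x0 \<and>
     (\<forall>t\<in>{1..T}. \<exists>v. is_minimizer X (f t) v \<and>
        (if l2 d (vsub (x (t - 1)) v) < \<beta> * f t v then x t = v
         else (\<exists>l. euclid_proj d {y \<in> X. f t y \<le> l} (x (t - 1)) (x t)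
                   \<and> l2 d (vsub (x t) (x (t - 1))) = \<beta> * l)))"

end

theory Submission
  imports Defs
begin

text \<open>Local polyhedrality plus convexity give the global sharpness bound
  \<open>\<alpha> \<parallel>z - v\<parallel>\<^sub>2 \<le> f z - f v\<close> at every minimiser v. Against an arbitrary comparator
  trajectory y, take the potential \<open>2 \<parallel>x\<^sub>t - y\<^sub>t\<parallel>\<^sub>2\<close>. With \<open>\<beta> = 1 + 8/\<alpha>\<close>, in each
  round the algorithm's hitting plus movement cost plus the change of the potential
  is at most \<open>(2 + 12/\<alpha>)\<close> times the comparator's cost of that round: if the
  algorithm jumps to the minimiser v, its movement is below \<open>\<beta> f v\<close>; otherwise it
  moves to a point of the level set \<open>{f \<le> l}\<close> at distance \<open>\<beta> l\<close>, and sharpness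
  keeps that point, and y if \<open>f y \<le> l\<close>, within \<open>l/\<alpha>\<close> of v. Telescoping and
  comparing the switching norm with the Euclidean one by \<open>k\<^sub>1, k\<^sub>2\<close> give the
  theorem with \<open>C = 12\<close>.\<close>

lemma l2_eq_L2_set: "l2 d x = L2_set x {..<d}"
  by (simp add: l2_def L2_set_def)

lemma l2_nonneg: "0 \<le> l2 d x"
  by (simp add: l2_eq_L2_set)

lemma l2_vsub_commute: "l2 d (vsub a b) = l2 d (vsub b a)"
  unfolding l2_def vsub_def by (simp add: power2_commute)

lemma l2_vsub_triangle: "l2 d (vsub a c) \<le> l2 d (vsub a b) + l2 d (vsub b c)"
proof -
  have "vsub a c = (\<lambda>i. vsub a b i + vsub b c i)"
    by (auto simp: vsub_def)
  then show ?thesis unfolding l2_eq_L2_set by (simp add: L2_set_triangle_ineq)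
qed

lemma l2_vsub_convex_comb:
  assumes "0 \<le> u"
  shows "l2 d (vsub (vadd (vscale u x) (vscale (1 - u) v)) v) = u * l2 d (vsub x v)"
proof -
  have "vsub (vadd (vscale u x) (vscale (1 - u) v)) v = (\<lambda>i. u * vsub x v i)"
    by (auto simp: vsub_def vadd_def vscale_def algebra_simps)
  then show ?thesis unfolding l2_eq_L2_set by (metis L2_set_right_distrib[OF assms])
qed

lemma vsub_in_Rd: "a \<in> Rd d \<Longrightarrow> b \<in> Rd d \<Longrightarrow> vsub a b \<in> Rd d"
  by (simp add: Rd_def vsub_def)

lemma convex_local_sharpness_global:
  assumes cX: "convex_set X" and cf: "convex_fun_on X f"
    and w: "is_minimizer X f w" and \<epsilon>: "0 < \<epsilon>"
    and loc: "\<forall>x\<in>X. l2 d (vsub x w) \<le> \<epsilon> \<longrightarrow> \<alpha> * l2 d (vsub x w) \<le> f x - f w"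
    and zX: "z \<in> X"
  shows "\<alpha> * l2 d (vsub z w) \<le> f z - f w"
proof (cases "l2 d (vsub z w) \<le> \<epsilon>")
  case True
  then show ?thesis using loc zX by blast
next
  case False
  define D where "D = l2 d (vsub z w)"
  define u where "u = \<epsilon> / D"
  define p where "p = vadd (vscale u z) (vscale (1 - u) w)"
  have D: "0 < D" using False \<epsilon> by (simp add: D_def)
  have u: "0 \<le> u" "u \<le> 1" using False \<epsilon> D by (auto simp: u_def D_def)
  have wX: "w \<in> X" using w by (simp add: is_minimizer_def)
  have pX: "p \<in> X" using cX zX wX u unfolding convex_set_def p_def by blast
  have "l2 d (vsub p w) = \<epsilon>"
    unfolding p_def l2_vsub_convex_comb[OF u(1)] using D by (simp add: u_def D_def)
  then have "\<alpha> * \<epsilon> \<le> f p - f w" using loc pX by auto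
  also have "f p \<le> u * f z + (1 - u) * f w"
    using cf zX wX u unfolding convex_fun_on_def p_def by blast
  finally have "\<alpha> * \<epsilon> \<le> u * (f z - f w)" by (simp add: algebra_simps)
  then have "\<epsilon> * (\<alpha> * D) \<le> \<epsilon> * (f z - f w)"
    using D by (simp add: u_def le_divide_eq algebra_simps)
  then show ?thesis using \<epsilon> by (simp add: D_def)
qed

lemma locally_polyhedral_sharp:
  assumes "convex_set X" "convex_fun_on X f" "0 < \<alpha>" "locally_polyhedral X (l2 d) \<alpha> f"
    and v: "is_minimizer X f v" and zX: "z \<in> X"
  shows "\<alpha> * l2 d (vsub z v) \<le> f z - f v"
proof -
  obtain w \<epsilon> where w: "is_minimizer X f w" and \<epsilon>: "0 < \<epsilon>"
    and loc: "\<forall>x\<in>X. l2 d (vsub x w) \<le> \<epsilon> \<longrightarrow> \<alpha> * l2 d (vsub x w) \<le> f x - f w"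
    using assms(4) unfolding locally_polyhedral_def by auto
  note sharp_w = convex_local_sharpness_global[OF assms(1,2) w \<epsilon> loc]
  have vX: "v \<in> X" and wX: "w \<in> X" using v w by (auto simp: is_minimizer_def)
  have fvw: "f v = f w" using v w vX wX by (meson is_minimizer_def order_antisym)
  have "\<alpha> * l2 d (vsub v w) \<le> 0" using sharp_w[OF vX] fvw by simp
  then have "l2 d (vsub w v) = 0"
    using \<open>0 < \<alpha>\<close> l2_nonneg[of d "vsub v w"] by (simp add: l2_vsub_commute mult_le_0_iff)
  then have "l2 d (vsub z v) \<le> l2 d (vsub z w)"
    using l2_vsub_triangle[of d z v w] by simp
  then show ?thesis
    using sharp_w[OF zX] fvw \<open>0 < \<alpha>\<close> by (smt (verit) mult_left_mono)
qed

definition pobd_step ::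
  "nat \<Rightarrow> (nat \<Rightarrow> real) set \<Rightarrow> real \<Rightarrow> ((nat \<Rightarrow> real) \<Rightarrow> real) \<Rightarrow> (nat \<Rightarrow> real) \<Rightarrow> (nat \<Rightarrow> real) \<Rightarrow> bool"
  where "pobd_step d X \<beta> g a b \<longleftrightarrow>
    (\<exists>v. is_minimizer X g v \<and>
       (if l2 d (vsub a v) < \<beta> * g v then b = v
        else (\<exists>l. euclid_proj d {y \<in> X. g y \<le> l} a b \<and> l2 d (vsub b a) = \<beta> * l)))"

lemma pobd_run_iff:
  "pobd_run d X \<beta> f x0 T x \<longleftrightarrow>
     x 0 = x0 \<and> (\<forall>t\<in>{1..T}. pobd_step d X \<beta> (f t) (x (t - 1)) (x t))"
  by (simp add: pobd_run_def pobd_step_def)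

lemma pobd_step_in_set: "pobd_step d X \<beta> g a b \<Longrightarrow> b \<in> X"
  unfolding pobd_step_def is_minimizer_def euclid_proj_def by (auto split: if_splits)

lemma pobd_step_amortized:
  fixes s :: real
  assumes s: "0 < s" and nonneg: "\<forall>z\<in>X. 0 \<le> g z" and yX: "y \<in> X"
    and sharp: "\<And>v z. is_minimizer X g v \<Longrightarrow> z \<in> X \<Longrightarrow> l2 d (vsub z v) \<le> s * (g z - g v)"
    and step: "pobd_step d X (1 + 8 * s) g a b"
  shows "g b + l2 d (vsub b a) + 2 * l2 d (vsub b y) - 2 * l2 d (vsub a y')
         \<le> (2 + 12 * s) * (g y + l2 d (vsub y y'))"
proof -
  obtain v where v: "is_minimizer X g v"
    and rule: "if l2 d (vsub a v) < (1 + 8 * s) * g v then b = v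
       else (\<exists>l. euclid_proj d {y \<in> X. g y \<le> l} a b \<and> l2 d (vsub b a) = (1 + 8 * s) * l)"
    using step unfolding pobd_step_def by blast
  have vX: "v \<in> X" and gv_le: "g v \<le> g y" using v yX by (auto simp: is_minimizer_def)
  have gv: "0 \<le> g v" using nonneg vX by blast
  have yv: "l2 d (vsub y v) \<le> s * g y - s * g v"
    using sharp[OF v yX] by (simp add: algebra_simps)
  have sgv: "s * g v \<le> s * g y" "0 \<le> s * g v" using s gv_le gv by simp_all
  have sD: "0 \<le> s * l2 d (vsub y y')" using s by (simp add: l2_nonneg)
  have rhs: "(2 + 12 * s) * (g y + l2 d (vsub y y'))
      = 2 * g y + 12 * (s * g y) + 2 * l2 d (vsub y y') + 12 * (s * l2 d (vsub y y'))"
    by (simp add: algebra_simps)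
  note dists = l2_nonneg[of d "vsub y y'"] l2_nonneg[of d "vsub a y'"]
  show ?thesis
  proof (cases "l2 d (vsub a v) < (1 + 8 * s) * g v")
    case True
    then have "b = v" using rule by simp
    have "l2 d (vsub v a) < g v + 8 * (s * g v)"
      using True by (simp add: l2_vsub_commute[of d v a] algebra_simps)
    moreover have "l2 d (vsub v y) \<le> s * g y - s * g v"
      using yv by (simp add: l2_vsub_commute)
    ultimately show ?thesis
      unfolding \<open>b = v\<close> using gv_le sgv sD rhs dists by linarith
  next
    case False
    then obtain l where bX: "b \<in> X" and gb: "g b \<le> l"
      and ba: "l2 d (vsub b a) = l + 8 * (s * l)"
      using rule by (auto simp: euclid_proj_def algebra_simps)
    have bv: "l2 d (vsub b v) \<le> s * l"
      using sharp[OF v bX] gb gv s by (smt (verit) mult_left_mono)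
    have dist_by: "l2 d (vsub b y) \<le> l2 d (vsub b v) + l2 d (vsub y v)"
      by (metis l2_vsub_triangle l2_vsub_commute)
    show ?thesis
    proof (cases "g y \<le> l")
      case True
      \<comment> \<open>both b and y lie within \<open>s l\<close> of v, and the long move is paid by the potential\<close>
      have "l2 d (vsub y v) \<le> s * l"
        using yv True s sgv by (smt (verit) mult_left_mono)
      moreover have "l2 d (vsub b a) \<le> l2 d (vsub b y) + l2 d (vsub y y') + l2 d (vsub a y')"
        using l2_vsub_triangle[of d b a y] l2_vsub_triangle[of d y a y']
          l2_vsub_commute[of d y' a] by linarith
      ultimately show ?thesis
        using ba bv dist_by gb rhs sD sgv gv gv_le dists by linarith
    next
      case False
      then have "s * l \<le> s * g y" using s by simp
      then show ?thesis
        using ba bv dist_by yv gb False rhs sD sgv dists by linarith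
    qed
  qed
qed

lemma pobd_cost_l2_amortized:
  fixes s :: real
  assumes s: "0 < s" and y0: "y 0 = x 0"
    and nonneg: "\<forall>t\<in>{1..T}. \<forall>z\<in>X. 0 \<le> f t z"
    and sharp: "\<And>t v z. t \<in> {1..T} \<Longrightarrow> is_minimizer X (f t) v \<Longrightarrow> z \<in> X
                  \<Longrightarrow> l2 d (vsub z v) \<le> s * (f t z - f t v)"
    and steps: "\<forall>t\<in>{1..T}. pobd_step d X (1 + 8 * s) (f t) (x (t - 1)) (x t)"
    and yX: "\<forall>t\<in>{1..T}. y t \<in> X"
  shows "soco_cost (l2 d) f T x + 2 * l2 d (vsub (x T) (y T))
         \<le> (2 + 12 * s) * soco_cost (l2 d) f T y"
  using nonneg sharp steps yX
proof (induction T)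
  case 0
  then show ?case using y0 by (simp add: soco_cost_def l2_def vsub_def)
next
  case (Suc T)
  have IH: "soco_cost (l2 d) f T x + 2 * l2 d (vsub (x T) (y T))
            \<le> (2 + 12 * s) * soco_cost (l2 d) f T y"
    by (rule Suc.IH) (use Suc.prems in auto)
  have "f (Suc T) (x (Suc T)) + l2 d (vsub (x (Suc T)) (x T))
        + 2 * l2 d (vsub (x (Suc T)) (y (Suc T))) - 2 * l2 d (vsub (x T) (y T))
        \<le> (2 + 12 * s) * (f (Suc T) (y (Suc T)) + l2 d (vsub (y (Suc T)) (y T)))"
  proof (rule pobd_step_amortized[where X = X])
    show "pobd_step d X (1 + 8 * s) (f (Suc T)) (x T) (x (Suc T))"
      using Suc.prems(3)[rule_format, of "Suc T"] by simp
  qed (use s Suc.prems in auto)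
  moreover have "\<And>z. soco_cost (l2 d) f (Suc T) z
      = soco_cost (l2 d) f T z + (f (Suc T) (z (Suc T)) + l2 d (vsub (z (Suc T)) (z T)))"
    by (simp add: soco_cost_def)
  ultimately show ?case using IH by (simp add: algebra_simps)
qed

locale norm_comparison =
  fixes d :: nat and N :: "(nat \<Rightarrow> real) \<Rightarrow> real" and k1 k2 :: real
  assumes norm: "is_norm_on d N" and k1: "0 < k1"
    and equiv: "\<forall>y\<in>Rd d. k1 * N y \<le> l2 d y \<and> l2 d y \<le> k2 * N y"
begin

context
  fixes X :: "(nat \<Rightarrow> real) set" and f :: "nat \<Rightarrow> (nat \<Rightarrow> real) \<Rightarrow> real" and T :: nat
    and z :: "nat \<Rightarrow> nat \<Rightarrow> real"
  assumes X: "X \<subseteq> Rd d" and z0: "z 0 \<in> Rd d" and zX: "\<forall>t\<in>{1..T}. z t \<in> X"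
    and nonneg: "\<forall>t\<in>{1..T}. \<forall>y\<in>X. 0 \<le> f t y"
begin

lemma trajectory_in_Rd: "t \<le> T \<Longrightarrow> z t \<in> Rd d"
  using X z0 zX by (cases t) auto

lemma move_in_Rd: "t \<in> {1..T} \<Longrightarrow> vsub (z t) (z (t - 1)) \<in> Rd d"
  by (intro vsub_in_Rd trajectory_in_Rd) auto

lemma move_norm_nonneg: "t \<in> {1..T} \<Longrightarrow> 0 \<le> N (vsub (z t) (z (t - 1)))"
  using norm move_in_Rd unfolding is_norm_on_def by blast

lemma soco_cost_nonneg: "0 \<le> soco_cost N f T z"
  unfolding soco_cost_def using move_norm_nonneg nonneg zX by (intro sum_nonneg) fastforce

lemma soco_cost_l2_lower: "min k1 1 * soco_cost N f T z \<le> soco_cost (l2 d) f T z"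
  unfolding soco_cost_def sum_distrib_left
proof (rule sum_mono)
  fix t assume t: "t \<in> {1..T}"
  have "min k1 1 * N (vsub (z t) (z (t - 1))) \<le> k1 * N (vsub (z t) (z (t - 1)))"
    using move_norm_nonneg[OF t] by (simp add: mult_right_mono)
  moreover have "min k1 1 * f t (z t) \<le> f t (z t)"
    using nonneg zX t k1 by (intro mult_left_le_one_le) auto
  ultimately show "min k1 1 * (f t (z t) + N (vsub (z t) (z (t - 1))))
        \<le> f t (z t) + l2 d (vsub (z t) (z (t - 1)))"
    using equiv move_in_Rd[OF t] by (auto simp: algebra_simps)
qed

lemma soco_cost_l2_upper: "soco_cost (l2 d) f T z \<le> max k2 1 * soco_cost N f T z"
  unfolding soco_cost_def sum_distrib_left
proof (rule sum_mono)
  fix t assume t: "t \<in> {1..T}"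
  have "k2 * N (vsub (z t) (z (t - 1))) \<le> max k2 1 * N (vsub (z t) (z (t - 1)))"
    using move_norm_nonneg[OF t] by (simp add: mult_right_mono)
  moreover have "f t (z t) \<le> max k2 1 * f t (z t)"
    using nonneg zX t by (intro mult_le_cancel_right1[THEN iffD2]) fastforce
  ultimately show "f t (z t) + l2 d (vsub (z t) (z (t - 1)))
        \<le> max k2 1 * (f t (z t) + N (vsub (z t) (z (t - 1))))"
    using equiv move_in_Rd[OF t] by (fastforce simp: algebra_simps)
qed

end

end

lemma le_soco_opt:
  fixes c :: real
  assumes c: "0 < c" and feasible: "z 0 = x0" "\<forall>t\<in>{1..T}. z t \<in> X"
    and bound: "\<And>y. y 0 = x0 \<Longrightarrow> \<forall>t\<in>{1..T}. y t \<in> X \<Longrightarrow> a \<le> c * soco_cost N f T y"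
  shows "a \<le> c * soco_opt X N f x0 T"
proof -
  have "a / c \<le> soco_opt X N f x0 T"
    unfolding soco_opt_def
    by (rule cInf_greatest) (use feasible bound c in \<open>auto simp: divide_le_eq mult.commute\<close>)
  then show ?thesis using c by (simp add: divide_le_eq mult.commute)
qed

lemma (in norm_comparison) soco_opt_nonneg:
  assumes "X \<subseteq> Rd d" "x0 \<in> Rd d" "\<forall>t\<in>{1..T}. \<forall>y\<in>X. 0 \<le> f t y"
    and feasible: "z 0 = x0" "\<forall>t\<in>{1..T}. z t \<in> X"
  shows "0 \<le> soco_opt X N f x0 T"
  using le_soco_opt[of 1 z x0 T X 0] soco_cost_nonneg assms by simp

lemma (in norm_comparison) pobd_competitive:
  assumes \<alpha>: "0 < \<alpha>" and X: "X \<subseteq> Rd d" "convex_set X" and x0: "x0 \<in> Rd d"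
    and f: "\<forall>t\<in>{1..T}. convex_fun_on X (f t) \<and> (\<forall>y\<in>X. 0 \<le> f t y) \<and>
                          locally_polyhedral X (l2 d) \<alpha> (f t)"
    and run: "pobd_run d X (1 + 8 / \<alpha>) f x0 T x"
  shows "soco_cost N f T x \<le> (max k2 1 / min k1 1) * (3 + 12 / \<alpha>) * soco_opt X N f x0 T"
proof -
  have nonneg: "\<forall>t\<in>{1..T}. \<forall>y\<in>X. 0 \<le> f t y" using f by blast
  have steps: "\<forall>t\<in>{1..T}. pobd_step d X (1 + 8 * (1 / \<alpha>)) (f t) (x (t - 1)) (x t)"
    and x_0: "x 0 = x0" using run by (auto simp: pobd_run_iff)
  have xX: "\<forall>t\<in>{1..T}. x t \<in> X" using steps pobd_step_in_set by blast
  have sharp: "l2 d (vsub z v) \<le> (1 / \<alpha>) * (f t z - f t v)"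
    if "t \<in> {1..T}" "is_minimizer X (f t) v" "z \<in> X" for t v z
    using locally_polyhedral_sharp[of X "f t" \<alpha> d v z] that f X \<alpha>
    by (simp add: pos_le_divide_eq mult.commute)
  define m M where "m = min k1 1" and "M = max k2 1"
  have m: "0 < m" and M: "0 < M" using k1 by (auto simp: m_def M_def)
  have "soco_cost N f T x \<le> (M / m * (2 + 12 / \<alpha>)) * soco_opt X N f x0 T"
  proof (rule le_soco_opt[OF _ x_0 xX])
    show "0 < M / m * (2 + 12 / \<alpha>)" using m M \<alpha> by (simp add: add_pos_nonneg)
    fix y assume y0: "y 0 = x0" and yX: "\<forall>t\<in>{1..T}. y t \<in> X"
    have "m * soco_cost N f T x \<le> soco_cost (l2 d) f T x"
      unfolding m_def using X x0 x_0 xX nonneg by (intro soco_cost_l2_lower) auto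
    also have "\<dots> \<le> (2 + 12 / \<alpha>) * soco_cost (l2 d) f T y"
      using pobd_cost_l2_amortized[of "1 / \<alpha>" y x T X f d] \<alpha> y0 x_0 nonneg sharp steps yX
        l2_nonneg[of d "vsub (x T) (y T)"] by simp
    also have "\<dots> \<le> (2 + 12 / \<alpha>) * (M * soco_cost N f T y)"
      using soco_cost_l2_upper[of X y T f] X x0 y0 yX nonneg \<alpha> unfolding M_def
      by (intro mult_left_mono) (auto simp: add_nonneg_nonneg)
    finally show "soco_cost N f T x \<le> M / m * (2 + 12 / \<alpha>) * soco_cost N f T y"
      using m by (simp add: field_simps)
  qed
  also have "\<dots> \<le> (M / m) * (3 + 12 / \<alpha>) * soco_opt X N f x0 T"
    using soco_opt_nonneg[OF X(1) x0 nonneg x_0 xX] m M \<alpha>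
    by (intro mult_right_mono mult_left_mono) auto
  finally show ?thesis unfolding m_def M_def .
qed

theorem theorem7:
  shows "\<exists>C>0. \<forall>\<alpha>>0. \<exists>\<beta>>0.
    \<forall>(d::nat) (X::(nat \<Rightarrow> real) set) (x0::nat \<Rightarrow> real) (N::(nat \<Rightarrow> real) \<Rightarrow> real)
      (k1::real) (k2::real) (T::nat) (f::nat \<Rightarrow> (nat \<Rightarrow> real) \<Rightarrow> real) (x::nat \<Rightarrow> nat \<Rightarrow> real).
      X \<subseteq> Rd d \<and> convex_set X \<and> x0 \<in> Rd d \<and>
      is_norm_on d N \<and> 0 < k1 \<and> 0 < k2 \<and>
      (\<forall>y\<in>Rd d. k1 * N y \<le> l2 d y \<and> l2 d y \<le> k2 * N y) \<and>
      (\<forall>t\<in>{1..T}. convex_fun_on X (f t) \<and> (\<forall>y\<in>X. 0 \<le> f t y) \<and>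
                   locally_polyhedral X (l2 d) \<alpha> (f t)) \<and>
      pobd_run d X \<beta> f x0 T x
      \<longrightarrow> soco_cost N f T x
            \<le> (max k2 1 / min k1 1) * (3 + C / \<alpha>) * soco_opt X N f x0 T"
  apply (rule exI[of _ "12::real"], intro conjI allI impI)
   apply simp
  subgoal for \<alpha>
    apply (rule exI[of _ "1 + 8 / \<alpha>"], intro conjI allI impI)
     apply (simp add: add_pos_nonneg)
    apply (elim conjE)
    apply (rule norm_comparison.pobd_competitive)
    by (auto intro: norm_comparison.intro)
  done

end
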